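(* Let $k\ge1$ and let $H$ be a $k$-local operator on $N$ qubits (not necessarily Hermitian). If $H|W^q\rangle=0$ for all $q\in\{0,1,\dots,\min(2k,N)\}$, then $H|W^p\rangle=0$ for all $p\in\{0,1,\dots,N\}$.
   Context: System of $N$ qubits with local basis $|0\rangle,|1\rangle$; $s_i^\dagger$ acts on site $i$ as $s^\dagger|0\rangle=|1\rangle$, $s^\dagger|1\rangle=0$, $s_i=(s_i^\dagger)^\dagger$; $|\overline 0\rangle=|0\rangle^{\otimes N}$. Every operator has a unique expansion in normal-ordered strings $s^\dagger_{j_1}\cdots s^\dagger_{j_n}s_{k_1}\cdots s_{k_m}$ (the $j$'s pairwise distinct, the $k$'s pairwise distinct); an operator is $k$-local if every string with nonzero coefficient involves at most $k$ distinct sites. $S^\dagger=\sum_i s_i^\dagger$ and $|W^p\rangle$ is the normalization of $(S^\dagger)^p|\overline 0\rangle$ for $p=0,\dots,N$. *)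

theory Defs
  imports Complex_Main
begin

text \<open>N qubits, sites 0..N-1. A computational basis state is identified with the set
  of sites in state 1 (a subset of {..<N}). A state vector is a function from such
  sets to complex amplitudes; an operator is its matrix, indexed by pairs of
  basis sets (only entries with both indices in Pow {..<N} are meaningful).\<close>

type_synonym qstate = "nat set \<Rightarrow> complex"
type_synonym qop = "nat set \<Rightarrow> nat set \<Rightarrow> complex"

definition apply_op :: "nat \<Rightarrow> qop \<Rightarrow> qstate \<Rightarrow> qstate" where
  "apply_op N H v = (\<lambda>S. \<Sum>T\<in>Pow {..<N}. H S T * v T)"

text \<open>Matrix of the normal-ordered string  s^dag_J s_K  (product of s^dag_j, j in J,
  after the product of s_k, k in K): s_K sends |T> to |T-K> if K is a subset of T
  (else 0), then s^dag_J sends |U> to |U \<union> J> if J and U are disjoint (else 0).\<close>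
definition nstring :: "nat set \<Rightarrow> nat set \<Rightarrow> qop" where
  "nstring J K = (\<lambda>S T. if K \<subseteq> T \<and> J \<inter> (T - K) = {} \<and> S = (T - K) \<union> J then 1 else 0)"

definition k_local :: "nat \<Rightarrow> nat \<Rightarrow> qop \<Rightarrow> bool" where
  "k_local N k H \<longleftrightarrow> (\<exists>c :: nat set \<Rightarrow> nat set \<Rightarrow> complex.
     (\<forall>J K. c J K \<noteq> 0 \<longrightarrow> J \<subseteq> {..<N} \<and> K \<subseteq> {..<N} \<and> card (J \<union> K) \<le> k) \<and>
     (\<forall>S T. S \<subseteq> {..<N} \<longrightarrow> T \<subseteq> {..<N} \<longrightarrow>
        H S T = (\<Sum>J\<in>Pow {..<N}. \<Sum>K\<in>Pow {..<N}. c J K * nstring J K S T)))"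

definition vac :: qstate where
  "vac = (\<lambda>S. if S = {} then 1 else 0)"

definition Sdag :: "nat \<Rightarrow> qop" where
  "Sdag N = (\<lambda>S T. \<Sum>i<N. nstring {i} {} S T)"

definition vnorm :: "nat \<Rightarrow> qstate \<Rightarrow> real" where
  "vnorm N v = sqrt (\<Sum>S\<in>Pow {..<N}. (cmod (v S))\<^sup>2)"

definition Wstate :: "nat \<Rightarrow> nat \<Rightarrow> qstate" where
  "Wstate N p = (let v = (apply_op N (Sdag N) ^^ p) vac
                 in (\<lambda>S. v S / complex_of_real (vnorm N v)))"

definition is_zero :: "nat \<Rightarrow> qstate \<Rightarrow> bool" where
  "is_zero N v \<longleftrightarrow> (\<forall>S. S \<subseteq> {..<N} \<longrightarrow> v S = 0)"

end

(*
  Up to normalisation |W^p> is the Dicke state D_p, the sum of all basis states with p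
  excitations. A string s^dag_J s_K has <S| s^dag_J s_K |D_p> = 1 exactly when
  S \<inter> (J \<union> K) = J and |J| - |K| = |S| - p. So for a fixed shift d = |S| - p the amplitude
  <S|H|D_p> is, as a function of S, a sum of terms each depending only on S \<inter> (J \<union> K), a set
  of at most k sites. Its Moebius transform over the subset lattice therefore vanishes on sets
  of more than k sites, and the function is determined by its values on sets U with |U| <= k.
  Such a value is an amplitude <U|H|D_q> with q <= |U| + k <= 2k, which vanishes by hypothesis.
*)
theory Submission
  imports Defs
begin

definition moebius_transform :: "('a set \<Rightarrow> 'b::comm_ring_1) \<Rightarrow> 'a set \<Rightarrow> 'b" where
  "moebius_transform f S = (\<Sum>U\<in>Pow S. (-1) ^ card (S - U) * f U)"

lemma moebius_transform_sum:
  "moebius_transform (\<lambda>U. \<Sum>i\<in>I. f i U) S = (\<Sum>i\<in>I. moebius_transform (f i) S)"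
  unfolding moebius_transform_def sum_distrib_left by (rule sum.swap)

lemma moebius_transform_scale:
  "moebius_transform (\<lambda>U. c * f U) S = c * moebius_transform f S"
  unfolding moebius_transform_def sum_distrib_left by (simp add: mult_ac)

lemma moebius_transform_eq_0_if_independent:
  assumes "finite S" and "\<not> S \<subseteq> A" and indep: "\<And>U. f U = f (U \<inter> A)"
  shows "moebius_transform f S = 0"
proof -
  obtain i where i: "i \<in> S" "i \<notin> A" using assms(2) by blast
  define S0 where "S0 = S - {i}"
  have S: "S = insert i S0" and "i \<notin> S0" and "finite S0"
    using i \<open>finite S\<close> by (auto simp: S0_def)
  have inj: "inj_on (insert i) (Pow S0)"
    using \<open>i \<notin> S0\<close> unfolding inj_on_def by auto
  have flip: "(-1) ^ card (S - insert i U) * f (insert i U) = - ((-1) ^ card (S - U) * f U)"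
    if "U \<subseteq> S0" for U
  proof -
    have "S - U = insert i (S - insert i U)" and "S - insert i U = S0 - U"
      using that \<open>i \<notin> S0\<close> S by blast+
    moreover have "f (insert i U) = f U"
      using indep[of "insert i U"] indep[of U] \<open>i \<notin> A\<close> by simp
    ultimately show ?thesis
      using \<open>finite S0\<close> \<open>i \<notin> S0\<close> by simp
  qed
  have "moebius_transform f S
      = (\<Sum>U\<in>Pow S0. (-1) ^ card (S - U) * f U)
        + (\<Sum>U\<in>insert i ` Pow S0. (-1) ^ card (S - U) * f U)"
    unfolding moebius_transform_def S Pow_insert
    by (rule sum.union_disjoint) (use \<open>i \<notin> S0\<close> \<open>finite S0\<close> in auto)
  also have "\<dots> = 0"
    by (simp add: sum.reindex[OF inj] flip sum_negf)
  finally show ?thesis .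
qed

lemma eq_0_if_moebius_transform_eq_0_above:
  assumes "finite S"
    and big: "\<And>U. U \<subseteq> S \<Longrightarrow> k < card U \<Longrightarrow> moebius_transform f U = 0"
    and small: "\<And>U. U \<subseteq> S \<Longrightarrow> card U \<le> k \<Longrightarrow> f U = 0"
  shows "f S = 0"
  using assms
proof (induction "card S" arbitrary: S rule: less_induct)
  case less
  show ?case
  proof (cases "card S \<le> k")
    case True
    then show ?thesis using less.prems by blast
  next
    case False
    have proper: "f U = 0" if "U \<in> Pow S - {S}" for U
    proof -
      have "U \<subset> S" using that by blast
      then show ?thesis
        using less.hyps[of U] less.prems psubset_card_mono[of S U] finite_subset[of U S] by auto
    qed
    have "0 = moebius_transform f S"
      using less.prems False by auto
    also have "\<dots> = f S + (\<Sum>U\<in>Pow S - {S}. (-1) ^ card (S - U) * f U)"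
      unfolding moebius_transform_def using \<open>finite S\<close> by (subst sum.remove[of _ S]) auto
    also have "\<dots> = f S"
      using proper by simp
    finally show ?thesis by simp
  qed
qed

lemma card_Diff_Un_eq:
  assumes "S \<inter> (J \<union> K) = J" and "finite S" and "finite K"
  shows "int (card ((S - J) \<union> K)) = int (card S) - int (card J) + int (card K)"
proof -
  have "J \<subseteq> S" and "(S - J) \<inter> K = {}" using assms(1) by blast+
  then show ?thesis
    using assms(2,3) card_mono[of S J] by (simp add: card_Un_disjoint card_Diff_subset finite_subset)
qed

lemma apply_op_sum: "apply_op N (\<lambda>S T. \<Sum>i\<in>I. H i S T) v = (\<lambda>S. \<Sum>i\<in>I. apply_op N (H i) v S)"
  unfolding apply_op_def sum_distrib_right by (rule ext, rule sum.swap)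

lemma apply_op_scale_op: "apply_op N (\<lambda>S T. c * H S T) v = (\<lambda>S. c * apply_op N H v S)"
  unfolding apply_op_def sum_distrib_left by (simp add: mult.assoc)

lemma apply_op_scale_state: "apply_op N H (\<lambda>T. c * v T) = (\<lambda>S. c * apply_op N H v S)"
  unfolding apply_op_def sum_distrib_left by (simp add: mult_ac)

lemma apply_op_cong:
  "(\<And>T. T \<subseteq> {..<N} \<Longrightarrow> H S T = H' S T) \<Longrightarrow> apply_op N H v S = apply_op N H' v S"
  unfolding apply_op_def by (rule sum.cong) auto

lemma nstring_eq: "nstring J K S T = (if S \<inter> (J \<union> K) = J \<and> T = (S - J) \<union> K then 1 else 0)"
  unfolding nstring_def by (rule if_cong) auto

definition dicke :: "nat \<Rightarrow> nat \<Rightarrow> qstate" where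
  "dicke N p = (\<lambda>S. if S \<subseteq> {..<N} \<and> card S = p then 1 else 0)"

lemma apply_nstring_dicke:
  assumes "J \<subseteq> {..<N}" and "K \<subseteq> {..<N}"
  shows "apply_op N (nstring J K) (dicke N p) S
    = (if S \<subseteq> {..<N} \<and> S \<inter> (J \<union> K) = J \<and> card ((S - J) \<union> K) = p then 1 else 0)"
proof -
  have "apply_op N (nstring J K) (dicke N p) S
      = (\<Sum>T\<in>Pow {..<N}. if T = (S - J) \<union> K then
           (if S \<inter> (J \<union> K) = J then dicke N p T else 0) else 0)"
    unfolding apply_op_def nstring_eq by (rule sum.cong) auto
  moreover have "(S - J) \<union> K \<subseteq> {..<N} \<longleftrightarrow> S \<subseteq> {..<N}" using assms by blast
  ultimately show ?thesis
    by (simp add: dicke_def)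
qed

lemma apply_Sdag_dicke:
  "apply_op N (Sdag N) (dicke N p) = (\<lambda>S. of_nat (Suc p) * dicke N (Suc p) S)"
proof
  fix S :: "nat set"
  have summand: "(if S \<subseteq> {..<N} \<and> S \<inter> {i} = {i} \<and> card (S - {i}) = p then 1 else 0)
      = (if i \<in> S then dicke N (Suc p) S else 0)" for i
    using finite_subset[of S "{..<N}"] card_Suc_Diff1[of S i]
    by (auto simp: dicke_def)
  have "apply_op N (Sdag N) (dicke N p) S = (\<Sum>i<N. if i \<in> S then dicke N (Suc p) S else 0)"
    unfolding Sdag_def apply_op_sum by (simp add: apply_nstring_dicke summand)
  also have "\<dots> = of_nat (card ({..<N} \<inter> S)) * dicke N (Suc p) S"
    by (simp add: sum.If_cases)
  also have "\<dots> = of_nat (Suc p) * dicke N (Suc p) S"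
    by (auto simp: dicke_def Int_absorb1)
  finally show "apply_op N (Sdag N) (dicke N p) S = of_nat (Suc p) * dicke N (Suc p) S" .
qed

lemma Sdag_power_vac: "(apply_op N (Sdag N) ^^ p) vac = (\<lambda>S. fact p * dicke N p S)"
proof (induction p)
  case 0
  show ?case
    by (rule ext) (auto simp: vac_def dicke_def finite_subset)
next
  case (Suc p)
  then show ?case
    by (simp add: apply_op_scale_state apply_Sdag_dicke mult_ac)
qed

lemma is_zero_apply_Wstate_iff:
  assumes "p \<le> N"
  shows "is_zero N (apply_op N H (Wstate N p)) \<longleftrightarrow> is_zero N (apply_op N H (dicke N p))"
proof -
  define v where "v = (\<lambda>S. fact p * dicke N p S)"
  have "0 < (\<Sum>S\<in>Pow {..<N}. (cmod (v S))\<^sup>2)"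
  proof (rule sum_pos2)
    show "{..<p} \<in> Pow {..<N}" and "0 < (cmod (v {..<p}))\<^sup>2"
      using assms by (auto simp: v_def dicke_def)
  qed simp_all
  then have "vnorm N v \<noteq> 0"
    by (simp add: vnorm_def)
  define r where "r = fact p / complex_of_real (vnorm N v)"
  have "r \<noteq> 0"
    using \<open>vnorm N v \<noteq> 0\<close> by (simp add: r_def)
  moreover have "Wstate N p = (\<lambda>S. r * dicke N p S)"
    by (simp add: Wstate_def Sdag_power_vac v_def r_def)
  ultimately show ?thesis
    by (simp add: apply_op_scale_state is_zero_def)
qed

definition shift_amp :: "nat \<Rightarrow> (nat set \<Rightarrow> nat set \<Rightarrow> complex) \<Rightarrow> int \<Rightarrow> nat set \<Rightarrow> complex" where
  "shift_amp N c d S = (\<Sum>J\<in>Pow {..<N}. \<Sum>K\<in>Pow {..<N}.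
     (if int (card J) - int (card K) = d then c J K else 0) * (if S \<inter> (J \<union> K) = J then 1 else 0))"

lemma apply_op_dicke_eq_shift_amp:
  assumes expansion: "\<And>T. T \<subseteq> {..<N} \<Longrightarrow>
      H S T = (\<Sum>J\<in>Pow {..<N}. \<Sum>K\<in>Pow {..<N}. c J K * nstring J K S T)"
    and "S \<subseteq> {..<N}"
  shows "apply_op N H (dicke N p) S = shift_amp N c (int (card S) - int p) S"
proof -
  have "apply_op N H (dicke N p) S
      = (\<Sum>J\<in>Pow {..<N}. \<Sum>K\<in>Pow {..<N}. c J K * apply_op N (nstring J K) (dicke N p) S)"
    using apply_op_cong[of N H S "\<lambda>S T. \<Sum>J\<in>Pow {..<N}. \<Sum>K\<in>Pow {..<N}. c J K * nstring J K S T"]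
      expansion by (simp add: apply_op_sum apply_op_scale_op)
  also have "\<dots> = shift_amp N c (int (card S) - int p) S"
    unfolding shift_amp_def
  proof (intro sum.cong refl)
    fix J K assume "J \<in> Pow {..<N}" "K \<in> Pow {..<N}"
    then show "c J K * apply_op N (nstring J K) (dicke N p) S
      = (if int (card J) - int (card K) = int (card S) - int p then c J K else 0)
        * (if S \<inter> (J \<union> K) = J then 1 else 0)"
      using \<open>S \<subseteq> {..<N}\<close> card_Diff_Un_eq[of S J K] finite_subset[of _ "{..<N}"]
      by (auto simp: apply_nstring_dicke)
  qed
  finally show ?thesis .
qed

lemma moebius_transform_shift_amp:
  assumes local: "\<And>J K. c J K \<noteq> 0 \<Longrightarrow> card (J \<union> K) \<le> k"
    and "finite S" and "k < card S"
  shows "moebius_transform (shift_amp N c d) S = 0"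
proof -
  have "moebius_transform (\<lambda>U. if U \<inter> (J \<union> K) = J then 1 else 0) S = 0"
    if "J \<union> K \<subseteq> {..<N}" and "c J K \<noteq> 0" for J K
  proof (rule moebius_transform_eq_0_if_independent)
    have "finite (J \<union> K)"
      using that(1) finite_subset by blast
    then show "\<not> S \<subseteq> J \<union> K"
      using card_mono[of "J \<union> K" S] local[OF \<open>c J K \<noteq> 0\<close>] \<open>k < card S\<close> by linarith
  qed (auto simp: \<open>finite S\<close> Int_assoc)
  then show ?thesis
    unfolding shift_amp_def[abs_def] moebius_transform_sum moebius_transform_scale
    by (intro sum.neutral ballI) auto
qed

lemma shift_amp_neq_0_imp:
  assumes local: "\<And>J K. c J K \<noteq> 0 \<Longrightarrow> card (J \<union> K) \<le> k"
    and "S \<subseteq> {..<N}" and "shift_amp N c d S \<noteq> 0"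
  shows "\<exists>q \<le> min (card S + k) N. d = int (card S) - int q"
proof -
  obtain J K where "J \<subseteq> {..<N}" "K \<subseteq> {..<N}" "c J K \<noteq> 0"
    and d: "d = int (card J) - int (card K)" and S: "S \<inter> (J \<union> K) = J"
    using assms(3) unfolding shift_amp_def
    by (auto elim!: sum.not_neutral_contains_not_neutral split: if_splits)
  then have fin: "finite S" "finite J" "finite K"
    using \<open>S \<subseteq> {..<N}\<close> finite_subset by blast+
  define q where "q = card ((S - J) \<union> K)"
  have "q \<le> N"
    using card_mono[of "{..<N}" "(S - J) \<union> K"] \<open>S \<subseteq> {..<N}\<close> \<open>K \<subseteq> {..<N}\<close>
    by (auto simp: q_def)
  moreover have "q \<le> card S + k"
    using card_Un_le[of "S - J" K] card_mono[of S "S - J"] card_mono[of "J \<union> K" K]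
      local[OF \<open>c J K \<noteq> 0\<close>] fin by (auto simp: q_def)
  moreover have "d = int (card S) - int q"
    using card_Diff_Un_eq[OF S fin(1,3)] d by (simp add: q_def)
  ultimately show ?thesis by auto
qed

lemma shift_amp_eq_0_on_small_sets:
  assumes local: "\<And>J K. c J K \<noteq> 0 \<Longrightarrow> card (J \<union> K) \<le> k"
    and expansion: "\<And>S T. S \<subseteq> {..<N} \<Longrightarrow> T \<subseteq> {..<N} \<Longrightarrow>
      H S T = (\<Sum>J\<in>Pow {..<N}. \<Sum>K\<in>Pow {..<N}. c J K * nstring J K S T)"
    and low: "\<And>q. q \<le> min (2 * k) N \<Longrightarrow> is_zero N (apply_op N H (dicke N q))"
    and "U \<subseteq> {..<N}" and "card U \<le> k"
  shows "shift_amp N c d U = 0"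
proof (rule ccontr)
  assume "shift_amp N c d U \<noteq> 0"
  then obtain q where "q \<le> min (card U + k) N" and d: "d = int (card U) - int q"
    using shift_amp_neq_0_imp[OF local \<open>U \<subseteq> {..<N}\<close>] by blast
  then have "apply_op N H (dicke N q) U = 0"
    using low[of q] \<open>card U \<le> k\<close> \<open>U \<subseteq> {..<N}\<close> by (simp add: is_zero_def)
  moreover have "apply_op N H (dicke N q) U = shift_amp N c d U"
    unfolding d using expansion \<open>U \<subseteq> {..<N}\<close> by (intro apply_op_dicke_eq_shift_amp) auto
  ultimately show False
    using \<open>shift_amp N c d U \<noteq> 0\<close> by simp
qed

lemma shift_amp_eq_0_if_eq_0_on_small_sets:
  assumes local: "\<And>J K. c J K \<noteq> 0 \<Longrightarrow> card (J \<union> K) \<le> k"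
    and small: "\<And>U. U \<subseteq> {..<N} \<Longrightarrow> card U \<le> k \<Longrightarrow> shift_amp N c d U = 0"
    and "S \<subseteq> {..<N}"
  shows "shift_amp N c d S = 0"
proof (rule eq_0_if_moebius_transform_eq_0_above)
  show "finite S"
    using \<open>S \<subseteq> {..<N}\<close> by (rule finite_subset) simp
  show "moebius_transform (shift_amp N c d) U = 0" if "U \<subseteq> S" and "k < card U" for U
    using moebius_transform_shift_amp[OF local finite_subset[OF \<open>U \<subseteq> S\<close> \<open>finite S\<close>]
        \<open>k < card U\<close>] .
  show "shift_amp N c d U = 0" if "U \<subseteq> S" and "card U \<le> k" for U
    using small \<open>U \<subseteq> S\<close> \<open>S \<subseteq> {..<N}\<close> \<open>card U \<le> k\<close> by blast
qed

theorem proposition3: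
  fixes N k :: nat and H :: qop
  assumes "k \<ge> 1"
    and "k_local N k H"
    and "\<forall>q \<le> min (2 * k) N. is_zero N (apply_op N H (Wstate N q))"
  shows "\<forall>p \<le> N. is_zero N (apply_op N H (Wstate N p))"
proof -
  obtain c where local: "\<And>J K. c J K \<noteq> 0 \<Longrightarrow> card (J \<union> K) \<le> k"
    and expansion: "\<And>S T. S \<subseteq> {..<N} \<Longrightarrow> T \<subseteq> {..<N} \<Longrightarrow>
      H S T = (\<Sum>J\<in>Pow {..<N}. \<Sum>K\<in>Pow {..<N}. c J K * nstring J K S T)"
    using assms(2) unfolding k_local_def by blast
  have low: "is_zero N (apply_op N H (dicke N q))" if "q \<le> min (2 * k) N" for q
    using assms(3) that is_zero_apply_Wstate_iff[of q N H] by simp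
  have small: "shift_amp N c d U = 0" if "U \<subseteq> {..<N}" and "card U \<le> k" for d U
    using local expansion low that by (rule shift_amp_eq_0_on_small_sets)
  have "shift_amp N c d S = 0" if "S \<subseteq> {..<N}" for d S
    using local small that by (rule shift_amp_eq_0_if_eq_0_on_small_sets)
  moreover have "apply_op N H (dicke N p) S = shift_amp N c (int (card S) - int p) S"
    if "S \<subseteq> {..<N}" for p S
    using expansion that by (intro apply_op_dicke_eq_shift_amp) auto
  ultimately show ?thesis
    using is_zero_apply_Wstate_iff by (simp add: is_zero_def)
qed

end
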